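(* Let $\Omega\subset\mathbb{R}^d$ be open and connected, $m\ge1$, $p\colon\Omega\to[1,2]$ measurable, $X=L^2(\Omega,\mathbb{R}^m)$, $\rho_p(f)=\int_\Omega|f(x)|^{p(x)}\,dx$, and $\tau>0$. Then for every $f\in X$, $$M_\tau(\rho_p)(f)=\int_\Omega T_\tau\big(f(x),p(x)\big)\,dx,$$ where for $z\in\mathbb{R}^m$, $q\in[1,2]$, $$T_\tau(z,q)=\begin{cases}\frac{|z|^2}{2\tau}, & q=1,\ |z|\le\tau,\\ |z|-\frac{\tau}{2}, & q=1,\ |z|\ge\tau,\\ \frac{|z|^2}{1+2\tau}, & q=2,\\ (|z|-\bar\alpha)\,\frac{2\bar\alpha+q(|z|-\bar\alpha)}{2\tau q}, & 1<q<2.\end{cases}$$ Here $\bar\alpha=\bar\alpha(|z|,q,\tau)$ is the unique solution $\alpha\in[0,|z|)$ of $\alpha+\tau q\,\alpha^{q-1}=|z|$ when $z\neq0$, and $\bar\alpha=0$ when $z=0$.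
   Context: $|\cdot|$ is the Euclidean norm on $\mathbb{R}^m$ and $\|\cdot\|_2$ the norm of $X$. The Moreau envelope is $M_\tau(\rho_p)(f)=\inf_{g\in X}\big[\rho_p(g)+\frac{1}{2\tau}\|f-g\|_2^2\big]$. *)

theory Defs
  imports "HOL-Analysis.Analysis"
begin

text \<open>The space X = L^2(Omega, R^m), represented by (Lebesgue-)measurable functions
  with square-integrable norm on Omega (values outside Omega are irrelevant).\<close>
definition L2_space :: "'a::euclidean_space set \<Rightarrow> ('a \<Rightarrow> 'b::euclidean_space) set" where
  "L2_space \<Omega> = {f. f \<in> borel_measurable (lebesgue_on \<Omega>) \<and>
                      integrable (lebesgue_on \<Omega>) (\<lambda>x. (norm (f x))\<^sup>2)}"

definition L2_norm :: "'a::euclidean_space set \<Rightarrow> ('a \<Rightarrow> 'b::euclidean_space) \<Rightarrow> real" where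
  "L2_norm \<Omega> h = sqrt (integral\<^sup>L (lebesgue_on \<Omega>) (\<lambda>x. (norm (h x))\<^sup>2))"

definition rho_p :: "'a::euclidean_space set \<Rightarrow> ('a \<Rightarrow> real) \<Rightarrow> ('a \<Rightarrow> 'b::euclidean_space) \<Rightarrow> ennreal" where
  "rho_p \<Omega> p g = (\<integral>\<^sup>+ x. ennreal (norm (g x) powr p x) \<partial>lebesgue_on \<Omega>)"

definition moreau_env :: "real \<Rightarrow> (('a \<Rightarrow> 'b::real_normed_vector) \<Rightarrow> ennreal) \<Rightarrow> ('a \<Rightarrow> 'b) set
      \<Rightarrow> (('a \<Rightarrow> 'b) \<Rightarrow> real) \<Rightarrow> ('a \<Rightarrow> 'b) \<Rightarrow> ennreal" where
  "moreau_env \<tau> F X nrm f = (INF g\<in>X. F g + ennreal (1 / (2 * \<tau>) * (nrm (\<lambda>x. f x - g x))\<^sup>2))"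

definition alpha_bar :: "real \<Rightarrow> real \<Rightarrow> real \<Rightarrow> real" where
  "alpha_bar r q \<tau> = (if r = 0 then 0 else
      (THE \<alpha>. 0 \<le> \<alpha> \<and> \<alpha> < r \<and> \<alpha> + \<tau> * q * \<alpha> powr (q - 1) = r))"

definition T_fun :: "real \<Rightarrow> real \<Rightarrow> real \<Rightarrow> real" where
  "T_fun \<tau> r q =
     (if q = 1 then (if r \<le> \<tau> then r\<^sup>2 / (2 * \<tau>) else r - \<tau> / 2)
      else if q = 2 then r\<^sup>2 / (1 + 2 * \<tau>)
      else (let a = alpha_bar r q \<tau> in (r - a) * (2 * a + q * (r - a)) / (2 * \<tau> * q)))"

end

theory Submission imports Defs begin

text \<open>Pointwise, the integrand of the Moreau objective depends only on \<open>|g(x)|\<close> and \<open>|f(x) - g(x)|\<close>,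
  and \<open>||f(x)| - |g(x)|| \<le> |f(x) - g(x)|\<close> with equality when \<open>g(x)\<close> is a nonnegative multiple of
  \<open>f(x)\<close>. So the envelope reduces to minimising \<open>s^q + (r - s)^2/(2\<tau>)\<close> over \<open>s \<ge> 0\<close>, with
  \<open>r = |f(x)|\<close> and \<open>q = p(x)\<close>. By convexity of \<open>s^q\<close> the minimiser is the root of the optimality
  condition \<open>s + \<tau> q s^(q-1) = r\<close> (or \<open>0\<close> if there is none), and the minimum value is \<open>T\<^sub>\<tau>(r,q)\<close>.
  Choosing \<open>g(x)\<close> along \<open>f(x)\<close> with this norm gives a minimiser in \<open>L\<^sup>2\<close>, since \<open>|g| \<le> |f|\<close>.\<close>

lemma powr_above_tangent:
  fixes a s q :: real
  assumes "0 < a" "0 \<le> s" "1 \<le> q"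
  shows "a powr q + q * a powr (q - 1) * (s - a) \<le> s powr q"
proof (cases "s = 0")
  case True
  have "a powr q = a * a powr (q - 1)" using assms powr_mult_base[of a "q - 1"] by simp
  hence "a powr q + q * a powr (q - 1) * (s - a) = (1 - q) * a powr q" using True by (simp add: algebra_simps)
  also have "\<dots> \<le> 0" using assms by (simp add: mult_nonpos_nonneg)
  finally show ?thesis using True by simp
next
  case False
  have "s powr q - a powr q \<ge> (q * a powr (q - 1)) * (s - a)"
    by (rule convex_on_imp_above_tangent[where A="{0<..}"])
      (use assms False powr_convex[of q] has_real_derivative_powr[of a q] in
        \<open>auto simp: has_field_derivative_at_within interior_open\<close>)
  thus ?thesis by simp
qed

lemma prox_objective_min_at_root:
  fixes a s q r \<tau> :: real
  assumes "0 < a" "1 \<le> q" "\<tau> > 0" "a + \<tau> * q * a powr (q - 1) = r" "0 \<le> s"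
  shows "a powr q + (r - a)\<^sup>2 / (2 * \<tau>) \<le> s powr q + (r - s)\<^sup>2 / (2 * \<tau>)"
proof -
  have slope: "q * a powr (q - 1) = (r - a) / \<tau>" using assms(3,4) by (simp add: field_simps)
  have "(r - s)\<^sup>2 / (2 * \<tau>) - (r - a)\<^sup>2 / (2 * \<tau>) = (s - a)\<^sup>2 / (2 * \<tau>) - (r - a) / \<tau> * (s - a)"
    using assms(3) by (simp add: field_simps power2_eq_square)
  also have "\<dots> \<ge> - ((r - a) / \<tau>) * (s - a)" using assms(3) by simp
  finally show ?thesis using powr_above_tangent[OF assms(1,5,2)] slope by (simp add: algebra_simps)
qed

lemma prox_equation_strict_mono:
  fixes x y q \<tau> :: real
  assumes "1 \<le> q" "\<tau> > 0" "0 \<le> x" "x < y"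
  shows "x + \<tau> * q * x powr (q - 1) < y + \<tau> * q * y powr (q - 1)"
proof -
  have "x powr (q - 1) \<le> y powr (q - 1)" using assms by (intro powr_mono2) auto
  hence "\<tau> * q * x powr (q - 1) \<le> \<tau> * q * y powr (q - 1)" using assms by simp
  thus ?thesis using assms(4) by simp
qed

lemma prox_equation_root_exists:
  fixes q r \<tau> :: real
  assumes "1 < q" "\<tau> > 0" "r > 0"
  obtains a where "0 < a" "a < r" "a + \<tau> * q * a powr (q - 1) = r"
proof -
  define h where "h a = a + \<tau> * q * a powr (q - 1)" for a
  have "continuous_on {0..r} h" unfolding h_def using assms
    by (intro continuous_intros continuous_on_powr') auto
  moreover have "h 0 = 0" "h r > r" unfolding h_def using assms by simp_all
  ultimately obtain a where a: "0 \<le> a" "a \<le> r" "h a = r"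
    using IVT'[of h 0 r r] assms by auto
  with \<open>h 0 = 0\<close> \<open>h r > r\<close> assms have "0 < a" "a < r"
    by (cases "a = 0"; cases "a = r"; auto)+
  with a that show ?thesis unfolding h_def by blast
qed

lemma alpha_bar_eqI:
  fixes a q r \<tau> :: real
  assumes "1 \<le> q" "\<tau> > 0" "0 < a" "a < r" "a + \<tau> * q * a powr (q - 1) = r"
  shows "alpha_bar r q \<tau> = a"
proof -
  have "b = a" if "0 \<le> b" "b + \<tau> * q * b powr (q - 1) = r" for b
    using prox_equation_strict_mono[OF assms(1,2) that(1), of a]
      prox_equation_strict_mono[OF assms(1,2), of a b] assms that
    by (cases b a rule: linorder_cases) auto
  then show ?thesis
    unfolding alpha_bar_def using assms by (auto intro!: the_equality)
qed

lemma T_fun_at_root: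
  fixes a q r \<tau> :: real
  assumes "1 < q" "q \<le> 2" "\<tau> > 0" "0 < a" "a < r" "a + \<tau> * q * a powr (q - 1) = r"
  shows "T_fun \<tau> r q = a powr q + (r - a)\<^sup>2 / (2 * \<tau>)"
proof (cases "q = 2")
  case True
  have "r - a = 2 * \<tau> * a" using assms(4,6) True by simp
  moreover have "r = a * (1 + 2 * \<tau>)" using assms(4,6) True by (simp add: algebra_simps)
  ultimately show ?thesis
    unfolding T_fun_def using True assms(3,4) by (simp add: powr_numeral field_simps power2_eq_square)
next
  case False
  have "T_fun \<tau> r q = (r - a) * (2 * a + q * (r - a)) / (2 * \<tau> * q)"
    unfolding T_fun_def using False assms alpha_bar_eqI[of q \<tau> a r] by (simp add: Let_def)
  also have "\<dots> = a * ((r - a) / (\<tau> * q)) + (r - a)\<^sup>2 / (2 * \<tau>)"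
    using assms(1,3) by (simp add: field_simps power2_eq_square)
  also have "(r - a) / (\<tau> * q) = a powr (q - 1)" using assms(1,3,6) by (simp add: field_simps)
  also have "a * a powr (q - 1) = a powr q" using assms(4) powr_mult_base[of a "q - 1"] by simp
  finally show ?thesis .
qed

text \<open>The threshold clause determines \<open>a\<close> from \<open>r\<close> and \<open>q\<close> through a Borel condition, which is what
  makes a pointwise choice of \<open>a\<close> measurable.\<close>

definition prox_radius :: "real \<Rightarrow> real \<Rightarrow> real \<Rightarrow> real \<Rightarrow> bool" where
  "prox_radius \<tau> r q a \<longleftrightarrow> 0 \<le> a \<and> a \<le> r
     \<and> (\<forall>c>0. c \<le> a \<longleftrightarrow> c + \<tau> * q * c powr (q - 1) \<le> r)
     \<and> T_fun \<tau> r q = a powr q + (r - a)\<^sup>2 / (2 * \<tau>)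
     \<and> (\<forall>s\<ge>0. T_fun \<tau> r q \<le> s powr q + (r - s)\<^sup>2 / (2 * \<tau>))"

lemma prox_radiusD:
  assumes "prox_radius \<tau> r q a"
  shows "0 \<le> a" "a \<le> r" "T_fun \<tau> r q = a powr q + (r - a)\<^sup>2 / (2 * \<tau>)"
  using assms unfolding prox_radius_def by blast+

lemma prox_radius_at_root:
  fixes a q r \<tau> :: real
  assumes "1 \<le> q" "\<tau> > 0" "0 < a" "a + \<tau> * q * a powr (q - 1) = r"
    and "T_fun \<tau> r q = a powr q + (r - a)\<^sup>2 / (2 * \<tau>)"
  shows "prox_radius \<tau> r q a"
proof -
  have "0 \<le> \<tau> * q * a powr (q - 1)" using assms(1,2) by simp
  hence "a \<le> r" using assms(4) by linarith
  moreover have "c \<le> a \<longleftrightarrow> c + \<tau> * q * c powr (q - 1) \<le> r" if "c > 0" for c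
    using prox_equation_strict_mono[OF assms(1,2), of c a] prox_equation_strict_mono[OF assms(1,2), of a c]
      assms(3,4) that
    by (cases c a rule: linorder_cases) auto
  ultimately show ?thesis
    unfolding prox_radius_def using assms prox_objective_min_at_root[OF assms(3,1,2,4)] by auto
qed

lemma prox_radius_exists:
  fixes q r \<tau> :: real
  assumes "0 \<le> r" "\<tau> > 0" "1 \<le> q" "q \<le> 2"
  obtains a where "prox_radius \<tau> r q a"
proof -
  consider "q = 1" "r \<le> \<tau>" | "q = 1" "\<tau> < r" | "1 < q" "r = 0" | "1 < q" "0 < r"
    using assms by linarith
  then show ?thesis
  proof cases
    case 1
    have "r\<^sup>2 / (2 * \<tau>) \<le> s + (r - s)\<^sup>2 / (2 * \<tau>)" if "s \<ge> 0" for s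
    proof -
      have "0 \<le> s * (1 - r / \<tau>) + s\<^sup>2 / (2 * \<tau>)" using 1 assms that
        by (intro add_nonneg_nonneg mult_nonneg_nonneg) auto
      also have "\<dots> = s + (r - s)\<^sup>2 / (2 * \<tau>) - r\<^sup>2 / (2 * \<tau>)" using assms
        by (simp add: field_simps power2_eq_square)
      finally show ?thesis by simp
    qed
    with 1 assms have "prox_radius \<tau> r q 0"
      unfolding prox_radius_def T_fun_def by (auto simp: powr_one)
    then show ?thesis by (rule that)
  next
    case 2
    have "r - \<tau> / 2 = (r - \<tau>) + \<tau>\<^sup>2 / (2 * \<tau>)" using assms by (simp add: power2_eq_square)
    with 2 assms have "prox_radius \<tau> r q (r - \<tau>)"
      by (intro prox_radius_at_root) (auto simp: T_fun_def)
    then show ?thesis by (rule that)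
  next
    case 3
    have "c + \<tau> * q * c powr (q - 1) > 0" if "c > 0" for c
      using that assms 3 by (simp add: add_pos_nonneg)
    with 3 assms have "prox_radius \<tau> r q 0"
      unfolding prox_radius_def T_fun_def alpha_bar_def by (auto simp: Let_def not_le)
    then show ?thesis by (rule that)
  next
    case 4
    obtain a where "0 < a" "a < r" "a + \<tau> * q * a powr (q - 1) = r"
      using prox_equation_root_exists[OF 4(1) assms(2) 4(2)] .
    with 4 assms have "prox_radius \<tau> r q a"
      by (intro prox_radius_at_root T_fun_at_root) auto
    then show ?thesis by (rule that)
  qed
qed

lemma prox_radius_selection_measurable:
  fixes A r p :: "'a \<Rightarrow> real"
  assumes [measurable]: "r \<in> borel_measurable M" "p \<in> borel_measurable M"
    and A: "\<And>x. x \<in> space M \<Longrightarrow> prox_radius \<tau> (r x) (p x) (A x)"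
  shows "A \<in> borel_measurable M"
  unfolding borel_measurable_iff_ge
proof
  fix c :: real
  show "{x \<in> space M. c \<le> A x} \<in> sets M"
  proof (cases "c > 0")
    case False
    with A have "{x \<in> space M. c \<le> A x} = space M" unfolding prox_radius_def by force
    thus ?thesis by simp
  next
    case True
    with A have "{x \<in> space M. c \<le> A x} = {x \<in> space M. c + \<tau> * p x * c powr (p x - 1) \<le> r x}"
      unfolding prox_radius_def by auto
    also have "\<dots> \<in> sets M" by measurable
    finally show ?thesis .
  qed
qed

lemma T_fun_le_prox_objective:
  fixes z w :: "'b::real_normed_vector"
  assumes "prox_radius \<tau> (norm z) q a" "\<tau> > 0"
  shows "T_fun \<tau> (norm z) q \<le> norm w powr q + (norm (z - w))\<^sup>2 / (2 * \<tau>)"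
proof -
  have "\<bar>norm z - norm w\<bar>\<^sup>2 \<le> (norm (z - w))\<^sup>2" by (intro power_mono norm_triangle_ineq3) auto
  hence "(norm z - norm w)\<^sup>2 / (2 * \<tau>) \<le> (norm (z - w))\<^sup>2 / (2 * \<tau>)"
    using assms(2) by (simp add: divide_right_mono)
  moreover have "T_fun \<tau> (norm z) q \<le> norm w powr q + (norm z - norm w)\<^sup>2 / (2 * \<tau>)"
    using assms(1) unfolding prox_radius_def by auto
  ultimately show ?thesis by linarith
qed

lemma norm_radial_rescale:
  fixes z :: "'b::real_normed_vector"
  assumes "0 \<le> a" "a \<le> norm z"
  shows "norm ((a / norm z) *\<^sub>R z) = a" "norm (z - (a / norm z) *\<^sub>R z) = norm z - a"
proof -
  show "norm ((a / norm z) *\<^sub>R z) = a" using assms by (cases "z = 0") auto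
  show "norm (z - (a / norm z) *\<^sub>R z) = norm z - a"
  proof (cases "z = 0")
    case False
    have "z - (a / norm z) *\<^sub>R z = (1 - a / norm z) *\<^sub>R z" by (simp add: algebra_simps)
    moreover have "0 \<le> 1 - a / norm z" using assms False by simp
    ultimately show ?thesis using False by (simp add: left_diff_distrib)
  qed (use assms in simp)
qed

lemma L2_space_norm_diff_sq_integrable:
  assumes "f \<in> L2_space \<Omega>" "g \<in> L2_space \<Omega>"
  shows "integrable (lebesgue_on \<Omega>) (\<lambda>x. (norm (f x - g x))\<^sup>2)"
proof (rule Bochner_Integration.integrable_bound)
  show "integrable (lebesgue_on \<Omega>) (\<lambda>x. 2 * (norm (f x))\<^sup>2 + 2 * (norm (g x))\<^sup>2)"
    using assms unfolding L2_space_def by auto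
  have [measurable]: "f \<in> borel_measurable (lebesgue_on \<Omega>)" "g \<in> borel_measurable (lebesgue_on \<Omega>)"
    using assms unfolding L2_space_def by auto
  show "(\<lambda>x. (norm (f x - g x))\<^sup>2) \<in> borel_measurable (lebesgue_on \<Omega>)" by measurable
  have "(norm (f x - g x))\<^sup>2 \<le> 2 * (norm (f x))\<^sup>2 + 2 * (norm (g x))\<^sup>2" for x
  proof -
    have "(norm (f x - g x))\<^sup>2 \<le> (norm (f x) + norm (g x))\<^sup>2"
      by (intro power_mono norm_triangle_ineq4) auto
    also have "\<dots> \<le> 2 * (norm (f x))\<^sup>2 + 2 * (norm (g x))\<^sup>2"
      using zero_le_power2[of "norm (f x) - norm (g x)"] unfolding power2_diff power2_sum by linarith
    finally show ?thesis .
  qed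
  then show "AE x in lebesgue_on \<Omega>. norm ((norm (f x - g x))\<^sup>2) \<le> norm (2 * (norm (f x))\<^sup>2 + 2 * (norm (g x))\<^sup>2)"
    by (intro AE_I2) simp
qed

lemma moreau_objective_eq_nn_integral:
  fixes f g :: "'a::euclidean_space \<Rightarrow> 'b::euclidean_space"
  assumes [measurable]: "p \<in> borel_measurable (lebesgue_on \<Omega>)"
    and "\<tau> > 0" "f \<in> L2_space \<Omega>" "g \<in> L2_space \<Omega>"
  shows "rho_p \<Omega> p g + ennreal (1 / (2 * \<tau>) * (L2_norm \<Omega> (\<lambda>x. f x - g x))\<^sup>2)
     = (\<integral>\<^sup>+ x. ennreal (norm (g x) powr p x + (norm (f x - g x))\<^sup>2 / (2 * \<tau>)) \<partial>lebesgue_on \<Omega>)"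
proof -
  let ?M = "lebesgue_on \<Omega>"
  have [measurable]: "f \<in> borel_measurable ?M" "g \<in> borel_measurable ?M"
    using assms(3,4) unfolding L2_space_def by auto
  have int: "integrable ?M (\<lambda>x. (norm (f x - g x))\<^sup>2 / (2 * \<tau>))"
    using L2_space_norm_diff_sq_integrable[OF assms(3,4)] by simp
  have "1 / (2 * \<tau>) * (L2_norm \<Omega> (\<lambda>x. f x - g x))\<^sup>2 = integral\<^sup>L ?M (\<lambda>x. (norm (f x - g x))\<^sup>2 / (2 * \<tau>))"
    unfolding L2_norm_def by (simp add: integral_nonneg_AE)
  hence penalty: "ennreal (1 / (2 * \<tau>) * (L2_norm \<Omega> (\<lambda>x. f x - g x))\<^sup>2)
        = (\<integral>\<^sup>+ x. ennreal ((norm (f x - g x))\<^sup>2 / (2 * \<tau>)) \<partial>?M)"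
    using nn_integral_eq_integral[OF int] assms(2) by simp
  show ?thesis unfolding penalty rho_p_def
    by (subst nn_integral_add[symmetric]) (use assms(2) in auto)
qed

lemma moreau_objective_ge_T_fun:
  fixes f g :: "'a::euclidean_space \<Rightarrow> 'b::euclidean_space"
  assumes "p \<in> borel_measurable (lebesgue_on \<Omega>)" "\<And>x. x \<in> \<Omega> \<Longrightarrow> 1 \<le> p x \<and> p x \<le> 2"
    and "\<tau> > 0" "f \<in> L2_space \<Omega>" "g \<in> L2_space \<Omega>"
  shows "(\<integral>\<^sup>+ x. ennreal (T_fun \<tau> (norm (f x)) (p x)) \<partial>lebesgue_on \<Omega>)
    \<le> rho_p \<Omega> p g + ennreal (1 / (2 * \<tau>) * (L2_norm \<Omega> (\<lambda>x. f x - g x))\<^sup>2)"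
  unfolding moreau_objective_eq_nn_integral[OF assms(1,3-5)]
proof (intro nn_integral_mono ennreal_leI)
  fix x assume "x \<in> space (lebesgue_on \<Omega>)"
  then obtain a where "prox_radius \<tau> (norm (f x)) (p x) a"
    using prox_radius_exists[of "norm (f x)" \<tau> "p x"] assms(2,3) by auto
  then show "T_fun \<tau> (norm (f x)) (p x) \<le> norm (g x) powr p x + (norm (f x - g x))\<^sup>2 / (2 * \<tau>)"
    using T_fun_le_prox_objective assms(3) by blast
qed

lemma radial_minimiser_exists:
  fixes f :: "'a::euclidean_space \<Rightarrow> 'b::euclidean_space"
  assumes [measurable]: "p \<in> borel_measurable (lebesgue_on \<Omega>)"
    and "\<And>x. x \<in> \<Omega> \<Longrightarrow> 1 \<le> p x \<and> p x \<le> 2" "\<tau> > 0" "f \<in> L2_space \<Omega>"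
  obtains g where "g \<in> L2_space \<Omega>"
    "\<And>x. x \<in> \<Omega> \<Longrightarrow> norm (g x) powr p x + (norm (f x - g x))\<^sup>2 / (2 * \<tau>) = T_fun \<tau> (norm (f x)) (p x)"
proof -
  let ?M = "lebesgue_on \<Omega>"
  have [measurable]: "f \<in> borel_measurable ?M" and f_sq: "integrable ?M (\<lambda>x. (norm (f x))\<^sup>2)"
    using assms(4) unfolding L2_space_def by auto
  define A where "A x = (SOME a. prox_radius \<tau> (norm (f x)) (p x) a)" for x
  have A: "prox_radius \<tau> (norm (f x)) (p x) (A x)" if "x \<in> \<Omega>" for x
    unfolding A_def using prox_radius_exists[of "norm (f x)" \<tau> "p x"] assms(2)[OF that] assms(3)
    by (metis norm_ge_zero someI)
  have [measurable]: "A \<in> borel_measurable ?M"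
    by (rule prox_radius_selection_measurable) (use A in \<open>auto simp: space_restrict_space\<close>)
  define g where "g x = (A x / norm (f x)) *\<^sub>R f x" for x
  have norms: "norm (g x) = A x" "norm (f x - g x) = norm (f x) - A x" if "x \<in> \<Omega>" for x
    using norm_radial_rescale[of "A x" "f x"] prox_radiusD[OF A[OF that]] unfolding g_def by auto
  have "g \<in> L2_space \<Omega>"
    unfolding L2_space_def
  proof (intro CollectI conjI)
    show [measurable]: "g \<in> borel_measurable ?M" unfolding g_def by measurable
    have "norm ((norm (g x))\<^sup>2) \<le> norm ((norm (f x))\<^sup>2)" if "x \<in> \<Omega>" for x
      using norms(1)[OF that] prox_radiusD[OF A[OF that]] by (simp add: power_mono)
    then have "AE x in ?M. norm ((norm (g x))\<^sup>2) \<le> norm ((norm (f x))\<^sup>2)"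
      by (intro AE_I2) (simp add: space_restrict_space)
    then show "integrable ?M (\<lambda>x. (norm (g x))\<^sup>2)"
      by (rule Bochner_Integration.integrable_bound[OF f_sq, rotated]) measurable
  qed
  moreover have "norm (g x) powr p x + (norm (f x - g x))\<^sup>2 / (2 * \<tau>) = T_fun \<tau> (norm (f x)) (p x)"
    if "x \<in> \<Omega>" for x
    using norms[OF that] prox_radiusD(3)[OF A[OF that]] by simp
  ultimately show ?thesis by (rule that)
qed

theorem mainTheorem4:
  fixes \<Omega> :: "'a::euclidean_space set"
    and p :: "'a \<Rightarrow> real"
    and \<tau> :: real
    and f :: "'a \<Rightarrow> 'b::euclidean_space"
  assumes "open \<Omega>" and "connected \<Omega>"
    and "p \<in> borel_measurable (lebesgue_on \<Omega>)"
    and "\<And>x. x \<in> \<Omega> \<Longrightarrow> 1 \<le> p x \<and> p x \<le> 2"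
    and "\<tau> > 0"
    and "f \<in> L2_space \<Omega>"
  shows "moreau_env \<tau> (rho_p \<Omega> p) (L2_space \<Omega>) (L2_norm \<Omega>) f
           = (\<integral>\<^sup>+ x. ennreal (T_fun \<tau> (norm (f x)) (p x)) \<partial>lebesgue_on \<Omega>)"
proof (rule antisym)
  obtain g where g: "g \<in> L2_space \<Omega>"
    "\<And>x. x \<in> \<Omega> \<Longrightarrow> norm (g x) powr p x + (norm (f x - g x))\<^sup>2 / (2 * \<tau>) = T_fun \<tau> (norm (f x)) (p x)"
    using radial_minimiser_exists[OF assms(3-6)] by blast
  have attained: "rho_p \<Omega> p g + ennreal (1 / (2 * \<tau>) * (L2_norm \<Omega> (\<lambda>x. f x - g x))\<^sup>2)
      = (\<integral>\<^sup>+ x. ennreal (T_fun \<tau> (norm (f x)) (p x)) \<partial>lebesgue_on \<Omega>)"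
    unfolding moreau_objective_eq_nn_integral[OF assms(3,5,6) g(1)]
    by (rule nn_integral_cong) (simp add: g(2) space_restrict_space)
  show "moreau_env \<tau> (rho_p \<Omega> p) (L2_space \<Omega>) (L2_norm \<Omega>) f
      \<le> (\<integral>\<^sup>+ x. ennreal (T_fun \<tau> (norm (f x)) (p x)) \<partial>lebesgue_on \<Omega>)"
    unfolding moreau_env_def by (rule INF_lower2[OF g(1)]) (rule eq_refl[OF attained])
  show "(\<integral>\<^sup>+ x. ennreal (T_fun \<tau> (norm (f x)) (p x)) \<partial>lebesgue_on \<Omega>)
      \<le> moreau_env \<tau> (rho_p \<Omega> p) (L2_space \<Omega>) (L2_norm \<Omega>) f"
    unfolding moreau_env_def
    by (intro INF_greatest moreau_objective_ge_T_fun[OF assms(3-6)])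
qed

end
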